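(* Let $\mathcal{G}=\{(P,\lambda)\in\mathsf{Sp}(n-1,\omega)\times\mathbb{R}_+:\dim\ker(P-\lambda\,\mathrm{Id})\leq1\}$ and $\mathcal{G}_1=\{(P,\lambda)\in\mathsf{Sp}(n-1,\omega)\times\mathbb{R}_+:\dim\ker(P-\lambda\,\mathrm{Id})=1\}$. Then the map $\chi\colon\mathcal{G}\to\mathbb{R}$, $\chi(P,\mu)=\det(P-\mu\,\mathrm{Id})$, is a submersion in a neighbourhood of $\mathcal{G}_1$.
   Context: $\omega$ is the standard symplectic form on $\mathbb{R}^{2(n-1)}$, $\mathsf{Sp}(n-1,\omega)$ the corresponding real symplectic group, $\mathbb{R}_+=(0,\infty)$. $\mathcal{G}$ is an open subset of the manifold $\mathsf{Sp}(n-1,\omega)\times\mathbb{R}_+$. *)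

theory Defs
  imports "HOL-Analysis.Analysis"
begin

text \<open>Phase space R^(2(n-1)) is modelled as real^('k + 'k) with CARD('k) = n - 1:
  coordinates Inl i are the q_i, coordinates Inr i the p_i.\<close>

type_synonym 'k mat = "real ^ ('k + 'k) ^ ('k + 'k)"

definition J_std :: "('k::finite) mat" where
  "J_std = (\<chi> a b. case (a, b) of
              (Inl i, Inr j) \<Rightarrow> (if i = j then 1 else 0)
            | (Inr i, Inl j) \<Rightarrow> (if i = j then -1 else 0)
            | _ \<Rightarrow> 0)"

definition omega :: "real ^ ('k::finite + 'k) \<Rightarrow> real ^ ('k + 'k) \<Rightarrow> real" where
  "omega x y = x \<bullet> (J_std *v y)"

definition Sp :: "('k::finite) mat set" where
  "Sp = {P. \<forall>x y. omega (P *v x) (P *v y) = omega x y}"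

definition dim_ker :: "('k::finite) mat \<Rightarrow> real \<Rightarrow> nat" where
  "dim_ker P l = dim {x. (P - l *\<^sub>R mat 1) *v x = 0}"

definition GG :: "(('k::finite) mat \<times> real) set" where
  "GG = {(P, l). P \<in> Sp \<and> l > 0 \<and> dim_ker P l \<le> 1}"

definition GG1 :: "(('k::finite) mat \<times> real) set" where
  "GG1 = {(P, l). P \<in> Sp \<and> l > 0 \<and> dim_ker P l = 1}"

definition chi :: "('k::finite) mat \<times> real \<Rightarrow> real" where
  "chi = (\<lambda>(P, m). det (P - m *\<^sub>R mat 1))"

text \<open>Tangent space of a subset S of a Euclidean space at x: velocities at 0 of curves
  in S through x (for an embedded submanifold, this is its tangent space).\<close>
definition tangent_space :: "'a::euclidean_space set \<Rightarrow> 'a \<Rightarrow> 'a set" where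
  "tangent_space S x = {v. \<exists>\<gamma>. \<gamma> 0 = x \<and> (\<forall>t. \<gamma> t \<in> S) \<and> (\<gamma> has_vector_derivative v) (at 0)}"

definition submersion_at :: "'a::euclidean_space set \<Rightarrow> ('a \<Rightarrow> 'b::euclidean_space) \<Rightarrow> 'a \<Rightarrow> bool" where
  "submersion_at S f x \<longleftrightarrow> x \<in> S \<and>
     (\<exists>f'. (f has_derivative f') (at x) \<and> f' ` tangent_space S x = UNIV)"

end

theory Submission
  imports Defs
begin

text \<open>Right multiplication by the symplectic transvections \<open>T\<^sub>w(t) y = y + t \<omega>(w,y) w\<close> gives
  curves \<open>t \<mapsto> (P T\<^sub>w(t), \<mu>)\<close> in \<open>Sp \<times> \<real>\<^sub>+\<close> along which \<open>P T\<^sub>w(t) - \<mu> Id\<close> changes by a rank-one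
  matrix, so \<open>\<chi>\<close> is affine in \<open>t\<close>, with some slope \<open>g(P,\<mu>,w)\<close>. Wherever some slope is non-zero,
  \<open>\<chi>\<close> is a submersion, and \<open>dim ker (P - \<mu> Id) \<le> 1\<close> because a two-dimensional kernel meets the
  hyperplane annihilated by the rank-one term. If the kernel is a line spanned by \<open>u\<close>, the slope is
  non-zero as soon as \<open>Pw \<notin> range (P - \<mu> Id)\<close> and \<open>\<omega>(w,u) \<noteq> 0\<close>; such a \<open>w\<close> exists because a
  vector space is not the union of two proper subspaces. The required neighbourhood of \<open>\<G>\<^sub>1\<close> is
  the open set where some slope is non-zero.\<close>

lemma sum_UNIV_Plus:
  "sum f (UNIV :: ('a::finite + 'b::finite) set) = (\<Sum>i\<in>UNIV. f (Inl i)) + (\<Sum>i\<in>UNIV. f (Inr i))"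
  by (simp add: UNIV_Plus_UNIV[symmetric] sum.Plus comp_def del: UNIV_Plus_UNIV)

lemma J_std_mult_Inl: "(J_std *v y) $ Inl i = y $ Inr i"
  and J_std_mult_Inr: "(J_std *v y) $ Inr i = - y $ Inl i"
  unfolding J_std_def matrix_vector_mult_def
  by (simp_all add: sum_UNIV_Plus if_distrib[of "\<lambda>f. f _"] if_distrib[of "\<lambda>c. c * _"]
      cong: if_cong)

lemma omega_explicit: "omega x y = (\<Sum>i\<in>UNIV. x $ Inl i * y $ Inr i - x $ Inr i * y $ Inl i)"
  unfolding omega_def inner_vec_def
  by (simp add: sum_UNIV_Plus J_std_mult_Inl J_std_mult_Inr sum_subtractf sum_negf)

lemma omega_add_left: "omega (x + y) z = omega x z + omega y z"
  and omega_add_right: "omega z (x + y) = omega z x + omega z y"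
  and omega_scaleR_left: "omega (c *\<^sub>R x) z = c * omega x z"
  and omega_scaleR_right: "omega z (c *\<^sub>R x) = c * omega z x"
  and omega_commute: "omega x y = - omega y x"
  by (simp_all add: omega_explicit sum.distrib[symmetric] sum_distrib_left sum_negf[symmetric]
      algebra_simps)

lemma omega_self [simp]: "omega x x = 0"
  using omega_commute[of x x] by simp

lemma omega_nondegenerate:
  assumes "x \<noteq> 0" obtains y where "omega x y \<noteq> 0"
proof -
  have "J_std *v (J_std *v x) = - x"
    unfolding vec_eq_iff by (rule allI, case_tac i) (simp_all add: J_std_mult_Inl J_std_mult_Inr)
  then have "omega x (J_std *v x) = - (x \<bullet> x)"
    by (simp add: omega_def)
  then show ?thesis using assms that[of "J_std *v x"] by simp
qed

section \<open>Symplectic transvections\<close>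

definition outer :: "real^'n \<Rightarrow> real^'m \<Rightarrow> real^'m^'n" where
  "outer a b = (\<chi> i j. a $ i * b $ j)"

lemma outer_mult_vector: "outer a b *v y = (b \<bullet> y) *\<^sub>R a"
  unfolding outer_def matrix_vector_mult_def vec_eq_iff inner_vec_def
  by (simp add: sum_distrib_left algebra_simps)

lemma matrix_mult_outer: "(P::real^'n^'m) ** outer a b = outer (P *v a) b"
  unfolding outer_def matrix_matrix_mult_def matrix_vector_mult_def vec_eq_iff
  by (simp add: sum_distrib_left algebra_simps)

lemma outer_scaleR_left: "outer (c *\<^sub>R a) b = c *\<^sub>R outer a b"
  unfolding outer_def by (simp add: vec_eq_iff)

lemma outer_omega_mult_vector: "outer a (w v* J_std) *v y = omega w y *\<^sub>R a"
  by (simp add: outer_mult_vector dot_lmul_matrix omega_def)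

definition transvection :: "real^('k::finite + 'k) \<Rightarrow> real \<Rightarrow> 'k mat" where
  "transvection w t = mat 1 + t *\<^sub>R outer w (w v* J_std)"

lemma transvection_mult_vector: "transvection w t *v y = y + (t * omega w y) *\<^sub>R w"
  unfolding transvection_def
  by (simp add: matrix_vector_mult_add_rdistrib outer_omega_mult_vector
      scaleR_matrix_vector_assoc[symmetric])

lemma transvection_in_Sp: "transvection w t \<in> Sp"
  unfolding Sp_def
proof (intro CollectI allI)
  fix x y
  show "omega (transvection w t *v x) (transvection w t *v y) = omega x y"
    unfolding transvection_mult_vector using omega_commute[of x w]
    by (simp add: omega_add_left omega_add_right omega_scaleR_left omega_scaleR_right algebra_simps)
qed

lemma matrix_mult_transvection:
  "P ** transvection w t = P + t *\<^sub>R outer (P *v w) (w v* J_std)"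
  unfolding transvection_def
  by (simp add: matrix_add_ldistrib matrix_scalar_ac matrix_mult_outer outer_scaleR_left
      scaleR_matrix_vector_assoc[symmetric])

lemma Sp_mult: "P \<in> Sp \<Longrightarrow> Q \<in> Sp \<Longrightarrow> P ** Q \<in> Sp"
  unfolding Sp_def by (simp add: matrix_vector_mul_assoc[symmetric])

lemma Sp_surj:
  assumes "P \<in> Sp" shows "surj ((*v) P)"
proof -
  have "x = 0" if "P *v x = 0" for x
  proof (rule ccontr)
    assume "x \<noteq> 0"
    then obtain y where "omega x y \<noteq> 0" by (rule omega_nondegenerate)
    moreover have "omega x y = omega (P *v x) (P *v y)"
      using assms unfolding Sp_def by simp
    ultimately show False using \<open>P *v x = 0\<close> by (simp add: omega_explicit)
  qed
  then have "inj ((*v) P)"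
    by (simp add: linear_inj_on_iff_eq_0[OF matrix_vector_mul_linear])
  then show ?thesis
    using eucl.linear_injective_imp_surjective matrix_vector_mul_linear by blast
qed

lemma det_rows_add_multiple:
  fixes B :: "real^'n::finite^'n"
  assumes "finite S" "k \<notin> S"
  shows "det (\<chi> i. if i \<in> S then row i B + c i *s row k B else row i B) = det B"
  using assms
proof (induction S rule: finite_induct)
  case empty
  then show ?case by (simp add: row_def)
next
  case (insert j S)
  let ?M = "(\<chi> i. if i \<in> S then row i B + c i *s row k B else row i B) :: real^'n^'n"
  have "j \<noteq> k" using insert by auto
  have "row j ?M = row j B" "row k ?M = row k B" using insert by (simp_all add: row_def)
  then have rows: "(\<chi> i. if i \<in> insert j S then row i B + c i *s row k B else row i B)
      = (\<chi> i. if i = j then row j ?M + c j *s row k ?M else row i ?M)"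
    by (auto simp: vec_eq_iff row_def)
  show ?case unfolding rows det_row_operation[OF \<open>j \<noteq> k\<close>] using insert by simp
qed

lemma det_rows_add_rank_one:
  fixes A :: "real^'n::finite^'n"
  assumes "finite S"
  shows "det (\<chi> i. if i \<in> S then row i A + (t * a$i) *s b else row i A)
     = det A + t * (\<Sum>i\<in>S. a$i * det (\<chi> j. if j = i then b else row j A))"
  using assms
proof (induction S rule: finite_induct)
  case empty
  then show ?case by (simp add: row_def)
next
  case (insert k S)
  let ?M = "(\<chi> i. if i \<in> S then row i A + (t * a$i) *s b else row i A) :: real^'n^'n"
  let ?B = "(\<chi> j. if j = k then b else row j A) :: real^'n^'n"
  have split: "(\<chi> i. if i \<in> insert k S then row i A + (t * a$i) *s b else row i A)
      = (\<chi> i. if i = k then row k A + (t * a$k) *s b else row i ?M)"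
    by (auto simp: vec_eq_iff row_def)
  have "(\<chi> i. if i = k then row k A else row i ?M) = ?M"
    using insert by (simp add: vec_eq_iff row_def)
  moreover have "det (\<chi> i. if i = k then b else row i ?M) = det ?B"
  proof -
    have "(\<chi> i. if i = k then b else row i ?M)
        = (\<chi> i. if i \<in> S then row i ?B + (t * a$i) *s row k ?B else row i ?B)"
      using insert by (auto simp: vec_eq_iff row_def)
    then show ?thesis using det_rows_add_multiple insert by simp
  qed
  ultimately have "det (\<chi> i. if i \<in> insert k S then row i A + (t * a$i) *s b else row i A)
      = det ?M + (t * a$k) * det ?B"
    unfolding split det_row_add[of k] det_row_mul[of k] by simp
  then show ?case
    using insert by (simp add: algebra_simps)
qed

lemma det_add_outer_affine:
  fixes A :: "real^'n::finite^'n"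
  shows "det (A + t *\<^sub>R outer a b) = det A + t * (det (A + outer a b) - det A)"
proof -
  define D where "D = (\<Sum>i\<in>UNIV. a$i * det ((\<chi> j. if j = i then b else row j A) :: real^'n^'n))"
  have "det (A + s *\<^sub>R outer a b) = det A + s * D" for s
  proof -
    have "A + s *\<^sub>R outer a b = (\<chi> i. if i \<in> UNIV then row i A + (s * a$i) *s b else row i A)"
      by (simp add: vec_eq_iff row_def outer_def)
    then show ?thesis using det_rows_add_rank_one[of UNIV A s a b] by (simp add: D_def)
  qed
  from this[of t] this[of 1] show ?thesis by simp
qed

lemma det_eq_0_iff_kernel:
  fixes M :: "real^'n::finite^'n"
  shows "det M = 0 \<longleftrightarrow> (\<exists>y. y \<noteq> 0 \<and> M *v y = 0)"
  using det_nz_iff_inj[OF matrix_vector_mul_linear[of M]]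
    linear_inj_on_iff_eq_0[OF matrix_vector_mul_linear[of M], of UNIV]
  by (auto simp: matrix_of_matrix_vector_mul)

lemma matrix_entry_has_derivative:
  "((\<lambda>M::real^'n::finite^'m::finite. M $ i $ j) has_derivative (\<lambda>H. H $ i $ j)) (at A)"
  by (intro bounded_linear.has_derivative[OF bounded_linear_vec_nth] has_derivative_ident)

lemma det_differentiable: "(det :: real^'n::finite^'n \<Rightarrow> real) differentiable (at A)"
  unfolding differentiable_def det_def[abs_def]
  by (rule exI has_derivative_sum has_derivative_mult_right has_derivative_prod
      matrix_entry_has_derivative)+

lemma linear_matrix_mult_right: "linear (\<lambda>M::real^'n::finite^'m::finite. M ** (C::real^'p::finite^'n))"
  by (rule linearI)
    (simp_all add: vec_eq_iff matrix_matrix_mult_def sum_distrib_left sum.distrib algebra_simps)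

section \<open>Rank-one perturbations of singular matrices\<close>

lemma subspace_Un_neq_UNIV:
  fixes S T :: "'a::real_vector set"
  assumes "subspace S" "subspace T" "S \<noteq> UNIV" "T \<noteq> UNIV"
  shows "S \<union> T \<noteq> UNIV"
proof
  assume cover: "S \<union> T = UNIV"
  obtain s t where "s \<notin> S" "t \<notin> T" using assms(3,4) by blast
  with cover have "s \<in> T" "t \<in> S" by blast+
  have "s + t \<notin> S"
    using subspace_diff[OF assms(1), of "s + t" t] \<open>s \<notin> S\<close> \<open>t \<in> S\<close> by auto
  moreover have "s + t \<notin> T"
    using subspace_diff[OF assms(2), of "s + t" s] \<open>t \<notin> T\<close> \<open>s \<in> T\<close> by auto
  ultimately show False using cover by blast
qed

lemma subspace_Int_hyperplane_nonzero:
  fixes S :: "'a::euclidean_space set"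
  assumes "subspace S" "2 \<le> dim S"
  obtains y where "y \<in> S" "y \<noteq> 0" "b \<bullet> y = 0"
proof -
  define H where "H = {x. b \<bullet> x = 0}"
  have "subspace H" unfolding H_def by (rule subspace_hyperplane)
  have "DIM('a) - 1 \<le> dim H"
    by (cases "b = 0") (simp_all add: H_def dim_hyperplane)
  moreover have "dim {x + y |x y. x \<in> S \<and> y \<in> H} \<le> DIM('a)"
    by (rule dim_subset_UNIV)
  ultimately have "dim (S \<inter> H) \<noteq> 0"
    using dim_sums_Int[OF assms(1) \<open>subspace H\<close>] assms(2) by linarith
  then show ?thesis using that unfolding H_def by auto
qed

lemma dim_eq_1E:
  assumes "dim S = 1"
  obtains u where "u \<in> S" "u \<noteq> 0" "S \<subseteq> span {u}"
proof -
  obtain B where "B \<subseteq> S" "independent B" "S \<subseteq> span B" "card B = 1"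
    using assms by (metis basis_exists)
  then obtain u where u: "B = {u}" by (metis card_1_singletonE)
  show ?thesis
  proof
    show "u \<in> S" "S \<subseteq> span {u}" using \<open>B \<subseteq> S\<close> \<open>S \<subseteq> span B\<close> u by auto
    show "u \<noteq> 0" using \<open>independent B\<close> dependent_zero u by blast
  qed
qed

lemma kernel_subspace: "subspace {x. (A::real^'n::finite^'m::finite) *v x = 0}"
  by (rule linear_subspace_kernel[OF matrix_vector_mul_linear])

lemma det_add_outer_eq_0:
  fixes A :: "real^'n::finite^'n"
  assumes "2 \<le> dim {x. A *v x = 0}"
  shows "det (A + outer a b) = 0"
proof -
  obtain y where "A *v y = 0" "y \<noteq> 0" "b \<bullet> y = 0"
    using subspace_Int_hyperplane_nonzero[OF kernel_subspace assms] by blast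
  then have "(A + outer a b) *v y = 0"
    by (simp add: matrix_vector_mult_add_rdistrib outer_mult_vector)
  with \<open>y \<noteq> 0\<close> show ?thesis by (auto simp: det_eq_0_iff_kernel)
qed

lemma det_add_outer_neq_0:
  fixes A :: "real^'n::finite^'n"
  assumes kernel: "\<And>y. A *v y = 0 \<Longrightarrow> y \<in> span {u}"
    and a: "a \<notin> range ((*v) A)" and b: "b \<bullet> u \<noteq> 0"
  shows "det (A + outer a b) \<noteq> 0"
proof -
  have "y = 0" if "(A + outer a b) *v y = 0" for y
  proof -
    from that have Ay: "A *v y = - (b \<bullet> y) *\<^sub>R a"
      by (simp add: matrix_vector_mult_add_rdistrib outer_mult_vector eq_neg_iff_add_eq_0)
    have "b \<bullet> y = 0"
    proof (rule ccontr)
      assume "b \<bullet> y \<noteq> 0"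
      then have "A *v ((- 1 / (b \<bullet> y)) *\<^sub>R y) = a"
        unfolding matrix_vector_mult_scaleR Ay by simp
      with a show False by (metis rangeI)
    qed
    with Ay kernel obtain c where "y = c *\<^sub>R u"
      by (auto simp: span_singleton)
    with \<open>b \<bullet> y = 0\<close> b show "y = 0" by simp
  qed
  then show ?thesis unfolding det_eq_0_iff_kernel by blast
qed

section \<open>The slope of \<open>\<chi>\<close> along transvection curves\<close>

definition chi_slope :: "'k::finite mat \<Rightarrow> real \<Rightarrow> real^('k + 'k) \<Rightarrow> real" where
  "chi_slope P m w =
     det (P - m *\<^sub>R mat 1 + outer (P *v w) (w v* J_std)) - det (P - m *\<^sub>R mat 1)"

lemma chi_transvection: "chi (P ** transvection w t, m) = chi (P, m) + t * chi_slope P m w"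
proof -
  have "P ** transvection w t - m *\<^sub>R mat 1
      = (P - m *\<^sub>R mat 1) + t *\<^sub>R outer (P *v w) (w v* J_std)"
    by (simp add: matrix_mult_transvection algebra_simps)
  then show ?thesis
    by (simp only: chi_def chi_slope_def case_prod_conv det_add_outer_affine)
qed

lemma chi_differentiable: "chi differentiable (at (z :: 'k::finite mat \<times> real))"
proof -
  have "(\<lambda>z::'k mat \<times> real. fst z - snd z *\<^sub>R mat 1) differentiable (at z)"
    unfolding differentiable_def by (auto intro!: derivative_eq_intros)
  from differentiable_chain_at[OF this det_differentiable]
  show ?thesis by (simp add: chi_def comp_def case_prod_beta')
qed

lemma submersion_at_if_chi_slope_neq_0:
  assumes "P \<in> Sp" "m > 0" and slope: "chi_slope P m w \<noteq> 0"
  shows "submersion_at (Sp \<times> {0<..}) chi (P, m)"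
proof -
  obtain f' where f': "(chi has_derivative f') (at (P, m))"
    using chi_differentiable unfolding differentiable_def by blast
  have "r \<in> f' ` tangent_space (Sp \<times> {0<..}) (P, m)" for r
  proof -
    define s where "s = r / chi_slope P m w"
    define v where "v = (s *\<^sub>R outer (P *v w) (w v* J_std), 0::real)"
    define \<gamma> where "\<gamma> t = (P, m) + t *\<^sub>R v" for t :: real
    have \<gamma>_transvection: "\<gamma> t = (P ** transvection w (t * s), m)" for t
      by (simp add: \<gamma>_def v_def matrix_mult_transvection)
    have \<gamma>': "(\<gamma> has_derivative (\<lambda>h. h *\<^sub>R v)) (at 0)"
      unfolding \<gamma>_def by (auto intro!: derivative_eq_intros)
    have "v \<in> tangent_space (Sp \<times> {0<..}) (P, m)"
      unfolding tangent_space_def has_vector_derivative_def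
    proof (intro CollectI exI conjI allI)
      show "\<gamma> 0 = (P, m)" by (simp add: \<gamma>_def)
      show "\<gamma> t \<in> Sp \<times> {0<..}" for t
        using assms(1,2) Sp_mult[OF _ transvection_in_Sp] by (simp add: \<gamma>_transvection)
    qed (rule \<gamma>')
    moreover have "f' v = r"
    proof -
      have "((chi \<circ> \<gamma>) has_derivative (f' \<circ> (\<lambda>h. h *\<^sub>R v))) (at 0)"
        using diff_chain_at[OF \<gamma>'] f' by (simp add: \<gamma>_def)
      moreover have "((chi \<circ> \<gamma>) has_derivative (\<lambda>h. h * r)) (at 0)"
      proof -
        have "chi \<circ> \<gamma> = (\<lambda>t. chi (P, m) + t * r)"
          using slope by (simp add: fun_eq_iff \<gamma>_transvection chi_transvection s_def)
        then show ?thesis by (auto intro!: derivative_eq_intros)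
      qed
      ultimately have "f' (1 *\<^sub>R v) = 1 * r"
        by (metis has_derivative_unique comp_apply)
      then show ?thesis by simp
    qed
    ultimately show ?thesis by blast
  qed
  with f' assms(1,2) show ?thesis
    unfolding submersion_at_def by blast
qed

lemma open_chi_slope_neq_0: "open {z :: 'k::finite mat \<times> real. chi_slope (fst z) (snd z) w \<noteq> 0}"
proof (rule open_Collect_neq)
  have det_cont: "continuous_on S (det :: real^'n::finite^'n \<Rightarrow> real)" for S
    using det_differentiable differentiable_imp_continuous_within continuous_at_imp_continuous_on
    by blast
  have mult_cont: "continuous_on S (\<lambda>M::'k mat. M ** outer w (w v* J_std))" for S
    by (rule linear_continuous_on)
      (simp add: linear_conv_bounded_linear[symmetric] linear_matrix_mult_right)
  show "continuous_on UNIV (\<lambda>z :: 'k mat \<times> real. chi_slope (fst z) (snd z) w)"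
    unfolding chi_slope_def matrix_mult_outer[symmetric]
    by (intro continuous_intros continuous_on_compose2[OF det_cont]
        continuous_on_compose2[OF mult_cont]) auto
qed auto

lemma dim_ker_le_1_if_chi_slope_neq_0:
  assumes "chi_slope P m w \<noteq> 0"
  shows "dim_ker P m \<le> 1"
proof (rule ccontr)
  define A where "A = P - m *\<^sub>R mat 1"
  assume "\<not> dim_ker P m \<le> 1"
  then have dim: "2 \<le> dim {x. A *v x = 0}"
    unfolding dim_ker_def A_def by simp
  then obtain y where "y \<noteq> 0" "A *v y = 0"
    using dim_eq_0[of "{x. A *v x = 0}"] by fastforce
  then have "det A = 0"
    using det_eq_0_iff_kernel by blast
  moreover have "det (A + outer (P *v w) (w v* J_std)) = 0"
    using dim by (rule det_add_outer_eq_0)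
  ultimately show False
    using assms by (simp add: chi_slope_def A_def)
qed

lemma chi_slope_neq_0_exists:
  assumes "P \<in> Sp" "dim_ker P m = 1"
  obtains w where "chi_slope P m w \<noteq> 0"
proof -
  define A where "A = P - m *\<^sub>R mat 1"
  obtain u where "A *v u = 0" "u \<noteq> 0" and kernel: "\<And>y. A *v y = 0 \<Longrightarrow> y \<in> span {u}"
    using assms(2) unfolding dim_ker_def A_def[symmetric] by (rule dim_eq_1E) auto
  then have "det A = 0"
    using det_eq_0_iff_kernel by blast
  have "\<not> inj ((*v) A)"
    using \<open>A *v u = 0\<close> \<open>u \<noteq> 0\<close> by (metis injD matrix_vector_mult_0_right)
  then have "range ((*v) A) \<noteq> UNIV"
    using eucl.linear_surjective_imp_injective matrix_vector_mul_linear by blast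
  then have "(*v) P -` range ((*v) A) \<noteq> UNIV"
    using Sp_surj[OF assms(1)] by (metis image_subset_iff_subset_vimage top.extremum_unique)
  moreover obtain y where "omega u y \<noteq> 0"
    using \<open>u \<noteq> 0\<close> by (rule omega_nondegenerate)
  then have "{w. w \<bullet> (J_std *v u) = 0} \<noteq> UNIV"
    using omega_commute[of u y] by (auto simp: omega_def)
  moreover have "subspace ((*v) P -` range ((*v) A))"
    by (intro linear_subspace_vimage linear_subspace_image matrix_vector_mul_linear subspace_UNIV)
  ultimately have "(*v) P -` range ((*v) A) \<union> {w. w \<bullet> (J_std *v u) = 0} \<noteq> UNIV"
    using subspace_Un_neq_UNIV subspace_hyperplane2 by blast
  then obtain w where "P *v w \<notin> range ((*v) A)" "w \<bullet> (J_std *v u) \<noteq> 0"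
    by auto
  then have "det (A + outer (P *v w) (w v* J_std)) \<noteq> 0"
    by (intro det_add_outer_neq_0[OF kernel]) (simp_all add: dot_lmul_matrix)
  with \<open>det A = 0\<close> that show ?thesis
    by (simp add: chi_slope_def A_def)
qed

theorem propositionA4:
  shows "\<exists>U :: ('k::finite mat \<times> real) set.
           openin (top_of_set (Sp \<times> {0<..})) U \<and> GG1 \<subseteq> U \<and> U \<subseteq> GG \<and>
           (\<forall>x\<in>U. submersion_at (Sp \<times> {0<..}) chi x)"
proof (intro exI conjI)
  define V where "V = (\<Union>w. {z :: 'k mat \<times> real. chi_slope (fst z) (snd z) w \<noteq> 0})"
  let ?U = "(Sp \<times> {0<..}) \<inter> V"
  show "openin (top_of_set (Sp \<times> {0<..})) ?U"
    unfolding V_def by (intro openin_open_Int open_UN ballI open_chi_slope_neq_0)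
  show "GG1 \<subseteq> ?U"
  proof
    fix z :: "'k mat \<times> real" assume "z \<in> GG1"
    then have "fst z \<in> Sp" "dim_ker (fst z) (snd z) = 1"
      unfolding GG1_def by auto
    then obtain w where "chi_slope (fst z) (snd z) w \<noteq> 0"
      by (rule chi_slope_neq_0_exists)
    with \<open>z \<in> GG1\<close> show "z \<in> ?U"
      unfolding GG1_def V_def by auto
  qed
  show "?U \<subseteq> GG"
    unfolding GG_def V_def by (auto dest: dim_ker_le_1_if_chi_slope_neq_0)
  show "\<forall>z\<in>?U. submersion_at (Sp \<times> {0<..}) chi z"
    unfolding V_def by (auto intro: submersion_at_if_chi_slope_neq_0)
qed

end
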